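(* For every $k\in\mathbb{N}$, the feasible region $P_k\subseteq[0,1]^{\mathcal{S}_k}$ is convex.
   Context: $\mathcal{S}_n$ denotes the set of permutations of $[n]$ and $\mathcal{S}$ the set of all finite permutations. For distinct reals $x_1,\dots,x_n$, $\mathrm{std}(x_1,\dots,x_n)$ is the unique $\pi\in\mathcal{S}_n$ with $\pi(i)<\pi(j)\iff x_i<x_j$; for $\sigma\in\mathcal{S}_n$ and $I\subseteq[n]$, $\mathrm{pat}_I(\sigma)=\mathrm{std}((\sigma(i))_{i\in I})$. For $\pi\in\mathcal{S}_k$, $\sigma\in\mathcal{S}_n$, $\mathrm{c\text{-}occ}(\pi,\sigma)$ is the number of intervals $I\subseteq[n]$ with $\mathrm{pat}_I(\sigma)=\pi$ and $\widetilde{\mathrm{c\text{-}occ}}(\pi,\sigma)=\mathrm{c\text{-}occ}(\pi,\sigma)/n$. The feasible region is $$P_k=\{\vec v\in[0,1]^{\mathcal{S}_k}\mid \exists(\sigma^m)_{m\in\mathbb N}\in\mathcal{S}^{\mathbb N}: |\sigma^m|\to\infty,\ \widetilde{\mathrm{c\text{-}occ}}(\pi,\sigma^m)\to v_\pi\ \forall\pi\in\mathcal{S}_k\}.$$ *)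

theory Defs
  imports Complex_Main
begin

text \<open>A permutation of [n] = {1..n} is represented as the list
  [sigma(1), ..., sigma(n)] of its values.\<close>

definition perms :: "nat \<Rightarrow> nat list set" where
  "perms n = {xs. length xs = n \<and> distinct xs \<and> set xs = {1..n}}"

definition all_perms :: "nat list set" where
  "all_perms = (\<Union>n. perms n)"

definition std :: "'a::linorder list \<Rightarrow> nat list" where
  "std xs = map (\<lambda>x. card {y \<in> set xs. y < x} + 1) xs"

text \<open>pat_I(sigma) for I a subset of [n] (indices are 1-based).\<close>
definition pat :: "nat set \<Rightarrow> nat list \<Rightarrow> nat list" where
  "pat I \<sigma> = std (map (\<lambda>i. \<sigma> ! (i - 1)) (sorted_list_of_set I))"

definition is_interval :: "nat set \<Rightarrow> bool" where
  "is_interval I \<longleftrightarrow> (\<exists>a b. I = {a..b})"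

definition c_occ :: "nat list \<Rightarrow> nat list \<Rightarrow> nat" where
  "c_occ \<pi> \<sigma> = card {I. I \<subseteq> {1..length \<sigma>} \<and> is_interval I \<and> pat I \<sigma> = \<pi>}"

definition c_occ_tilde :: "nat list \<Rightarrow> nat list \<Rightarrow> real" where
  "c_occ_tilde \<pi> \<sigma> = real (c_occ \<pi> \<sigma>) / real (length \<sigma>)"

text \<open>Vectors in [0,1]^{S_k} are functions on nat lists vanishing outside S_k.\<close>
definition feasible_region :: "nat \<Rightarrow> (nat list \<Rightarrow> real) set" where
  "feasible_region k = {v. (\<forall>\<pi>. \<pi> \<notin> perms k \<longrightarrow> v \<pi> = 0)
      \<and> (\<forall>\<pi>\<in>perms k. v \<pi> \<in> {0..1})
      \<and> (\<exists>\<sigma>s :: nat \<Rightarrow> nat list. (\<forall>m. \<sigma>s m \<in> all_perms)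
           \<and> filterlim (\<lambda>m. length (\<sigma>s m)) at_top sequentially
           \<and> (\<forall>\<pi>\<in>perms k. (\<lambda>m. c_occ_tilde \<pi> (\<sigma>s m)) \<longlonglongrightarrow> v \<pi>))}"

end

theory Submission
  imports Defs "HOL-Analysis.Elementary_Normed_Spaces"
begin

text \<open>Given permutations \<open>\<sigma>\<^sub>m\<close> realising \<open>v\<close> and \<open>\<tau>\<^sub>m\<close> realising \<open>w\<close>, concatenate
  (as a direct sum) many copies of \<open>\<sigma>\<^sub>m\<close> followed by many copies of \<open>\<tau>\<^sub>m\<close>, with
  multiplicities chosen so that the \<open>\<sigma>\<close>-block makes up a fraction close to \<open>1 - t\<close> of the total
  length. Consecutive occurrences of a pattern \<open>\<pi>\<close> are additive under direct sums up to
  \<open>|\<pi>|\<close> windows per junction, and the number of junctions is negligible compared with the length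
  as \<open>|\<sigma>\<^sub>m|, |\<tau>\<^sub>m| \<rightarrow> \<infinity>\<close>. Hence the consecutive-pattern densities of these
  concatenations converge to \<open>(1 - t) v + t w\<close>.\<close>

text \<open>Window starts are 0-based: the start \<open>i\<close> stands for the interval \<open>{i+1..i+|\<pi>|}\<close>.
  For \<open>\<pi> = []\<close> the correspondence with \<open>c_occ\<close> fails, since all empty intervals coincide.\<close>
definition window_starts :: "nat list \<Rightarrow> nat list \<Rightarrow> nat set" where
  "window_starts \<pi> s = {i. i + length \<pi> \<le> length s \<and> std (take (length \<pi>) (drop i s)) = \<pi>}"

lemma finite_window_starts: "finite (window_starts \<pi> s)"
  unfolding window_starts_def by (rule finite_subset[of _ "{..length s}"]) auto

lemma length_std [simp]: "length (std xs) = length xs"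
  by (simp add: std_def)

lemma std_map_add: "std (map ((+) c) xs) = std (xs :: nat list)"
proof -
  have "{y \<in> set (map ((+) c) xs). y < c + x} = (+) c ` {y \<in> set xs. y < x}" for x
    by auto
  then show ?thesis
    by (simp add: std_def card_image)
qed

lemma pat_interval_eq_std_take_drop:
  assumes "i + k \<le> length s"
  shows "pat {i+1..i+k} s = std (take k (drop i s))"
proof -
  have "map (\<lambda>j. s ! (j - 1)) [i+1..<i+k+1] = take k (drop i s)"
    by (rule nth_equalityI) (use assms in \<open>auto simp del: upt_Suc\<close>)
  then show ?thesis
    by (simp add: pat_def atLeastLessThanSuc_atLeastAtMost[symmetric])
qed

lemma c_occ_eq_card_window_starts:
  assumes "\<pi> \<noteq> []"
  shows "c_occ \<pi> s = card (window_starts \<pi> s)"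
proof -
  let ?k = "length \<pi>"
  let ?occ = "{I. I \<subseteq> {1..length s} \<and> is_interval I \<and> pat I s = \<pi>}"
  have "bij_betw (\<lambda>i. {i+1..i+?k}) (window_starts \<pi> s) ?occ"
  proof (rule bij_betw_imageI)
    show "inj_on (\<lambda>i. {i+1..i+?k}) (window_starts \<pi> s)"
      using assms by (intro inj_onI) (auto simp: Suc_le_eq)
    show "(\<lambda>i. {i+1..i+?k}) ` window_starts \<pi> s = ?occ"
    proof (intro equalityI subsetI)
      fix I assume "I \<in> (\<lambda>i. {i+1..i+?k}) ` window_starts \<pi> s"
      then obtain i where "i \<in> window_starts \<pi> s" "I = {i+1..i+?k}"
        by blast
      then show "I \<in> ?occ"
        using pat_interval_eq_std_take_drop[of i ?k s]
        by (auto simp: window_starts_def is_interval_def)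
    next
      fix I assume I: "I \<in> ?occ"
      then obtain a b where ab: "I = {a..b}"
        by (auto simp: is_interval_def)
      have "Suc b - a = ?k"
        using I ab by (auto simp: pat_def)
      moreover from this assms have "a \<le> b"
        by (cases "a \<le> b") auto
      moreover from this I ab have "1 \<le> a" "b \<le> length s"
        by auto
      ultimately have "a - 1 + ?k \<le> length s" "{a..b} = {a - 1 + 1..a - 1 + ?k}"
        by auto
      with I ab show "I \<in> (\<lambda>i. {i+1..i+?k}) ` window_starts \<pi> s"
        by (intro image_eqI[of _ _ "a - 1"])
           (auto simp: window_starts_def pat_interval_eq_std_take_drop[symmetric])
    qed
  qed
  then show ?thesis
    by (simp add: c_occ_def bij_betw_same_card)
qed

lemma window_starts_append_lower:
  "window_starts \<pi> xs \<union> (+) (length xs) ` window_starts \<pi> ys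
     \<subseteq> window_starts \<pi> (xs @ map ((+) c) ys)"
  by (auto simp: window_starts_def drop_map take_map std_map_add)

lemma window_starts_append_upper:
  "window_starts \<pi> (xs @ map ((+) c) ys)
     \<subseteq> window_starts \<pi> xs \<union> (+) (length xs) ` window_starts \<pi> ys
         \<union> {length xs - length \<pi>..<length xs}"
proof
  fix i assume i: "i \<in> window_starts \<pi> (xs @ map ((+) c) ys)"
  consider "i + length \<pi> \<le> length xs" | "length xs \<le> i" | "i < length xs" "length xs < i + length \<pi>"
    by linarith
  then show "i \<in> window_starts \<pi> xs \<union> (+) (length xs) ` window_starts \<pi> ys
      \<union> {length xs - length \<pi>..<length xs}"
  proof cases
    case 1
    then show ?thesis
      using i by (auto simp: window_starts_def)
  next
    case 2
    then obtain j where "i = length xs + j"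
      using le_Suc_ex by blast
    then show ?thesis
      using i by (auto simp: window_starts_def drop_map take_map std_map_add)
  next
    case 3
    then show ?thesis
      by auto
  qed
qed

lemma card_window_starts_append:
  assumes "\<pi> \<noteq> []"
  shows "card (window_starts \<pi> xs) + card (window_starts \<pi> ys)
           \<le> card (window_starts \<pi> (xs @ map ((+) c) ys))"
    and "card (window_starts \<pi> (xs @ map ((+) c) ys))
           \<le> card (window_starts \<pi> xs) + card (window_starts \<pi> ys) + length \<pi>"
proof -
  let ?A = "window_starts \<pi> xs" and ?B = "(+) (length xs) ` window_starts \<pi> ys"
  have fin: "finite ?A" "finite ?B"
    by (simp_all add: finite_window_starts)
  have disj: "?A \<inter> ?B = {}"
    using assms by (auto simp: window_starts_def)
  have card_AB: "card (?A \<union> ?B) = card ?A + card (window_starts \<pi> ys)"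
    using fin disj by (simp add: card_Un_disjoint card_image)
  show "card ?A + card (window_starts \<pi> ys) \<le> card (window_starts \<pi> (xs @ map ((+) c) ys))"
    using card_mono[OF finite_window_starts window_starts_append_lower[of \<pi> xs ys c]] card_AB by simp
  have "card (window_starts \<pi> (xs @ map ((+) c) ys))
          \<le> card (?A \<union> ?B \<union> {length xs - length \<pi>..<length xs})"
    using fin by (intro card_mono window_starts_append_upper) auto
  also have "\<dots> \<le> card (?A \<union> ?B) + length \<pi>"
    by (rule order_trans[OF card_Un_le]) simp
  finally show "card (window_starts \<pi> (xs @ map ((+) c) ys))
      \<le> card ?A + card (window_starts \<pi> ys) + length \<pi>"
    using card_AB by simp
qed

definition direct_sum :: "nat list \<Rightarrow> nat list \<Rightarrow> nat list" where
  "direct_sum \<sigma> \<tau> = \<sigma> @ map ((+) (length \<sigma>)) \<tau>"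

fun direct_sum_power :: "nat \<Rightarrow> nat list \<Rightarrow> nat list" where
  "direct_sum_power 0 \<sigma> = []"
| "direct_sum_power (Suc r) \<sigma> = direct_sum \<sigma> (direct_sum_power r \<sigma>)"

lemma length_direct_sum [simp]: "length (direct_sum \<sigma> \<tau>) = length \<sigma> + length \<tau>"
  by (simp add: direct_sum_def)

lemma length_direct_sum_power [simp]: "length (direct_sum_power r \<sigma>) = r * length \<sigma>"
  by (induction r) simp_all

lemma direct_sum_in_perms:
  assumes "\<sigma> \<in> perms n" "\<tau> \<in> perms l"
  shows "direct_sum \<sigma> \<tau> \<in> perms (n + l)"
proof -
  have "set (map ((+) n) \<tau>) = (+) n ` {1..l}"
    using assms(2) by (simp add: perms_def)
  also have "\<dots> = {n+1..n+l}"
    by simp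
  finally show ?thesis
    using assms by (auto simp: perms_def direct_sum_def distinct_map)
qed

lemma direct_sum_power_in_perms: "\<sigma> \<in> perms n \<Longrightarrow> direct_sum_power r \<sigma> \<in> perms (r * n)"
proof (induction r)
  case 0
  then show ?case
    by (simp add: perms_def)
next
  case (Suc r)
  then show ?case
    using direct_sum_in_perms by fastforce
qed

lemma c_occ_direct_sum:
  assumes "\<pi> \<noteq> []"
  shows "c_occ \<pi> \<sigma> + c_occ \<pi> \<tau> \<le> c_occ \<pi> (direct_sum \<sigma> \<tau>)"
    and "c_occ \<pi> (direct_sum \<sigma> \<tau>) \<le> c_occ \<pi> \<sigma> + c_occ \<pi> \<tau> + length \<pi>"
  using card_window_starts_append[OF assms]
  by (simp_all add: direct_sum_def c_occ_eq_card_window_starts[OF assms])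

lemma c_occ_direct_sum_power:
  assumes "\<pi> \<noteq> []"
  shows "r * c_occ \<pi> \<sigma> \<le> c_occ \<pi> (direct_sum_power r \<sigma>)"
    and "c_occ \<pi> (direct_sum_power r \<sigma>) \<le> r * (c_occ \<pi> \<sigma> + length \<pi>)"
proof (induction r)
  case 0
  have "c_occ \<pi> [] = 0"
    using assms by (simp add: c_occ_eq_card_window_starts window_starts_def)
  then show "0 * c_occ \<pi> \<sigma> \<le> c_occ \<pi> (direct_sum_power 0 \<sigma>)"
    and "c_occ \<pi> (direct_sum_power 0 \<sigma>) \<le> 0 * (c_occ \<pi> \<sigma> + length \<pi>)"
    by simp_all
next
  case (Suc r)
  show "Suc r * c_occ \<pi> \<sigma> \<le> c_occ \<pi> (direct_sum_power (Suc r) \<sigma>)"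
    using Suc.IH(1) c_occ_direct_sum(1)[OF assms, of \<sigma> "direct_sum_power r \<sigma>"] by simp
  show "c_occ \<pi> (direct_sum_power (Suc r) \<sigma>) \<le> Suc r * (c_occ \<pi> \<sigma> + length \<pi>)"
    using Suc.IH(2) c_occ_direct_sum(2)[OF assms, of \<sigma> "direct_sum_power r \<sigma>"] by simp
qed

text \<open>The block of copies of \<open>\<sigma>\<close> and the block of copies of \<open>\<tau>\<close> have lengths in the
  ratio \<open>a : b\<close>.\<close>
definition blend :: "nat \<Rightarrow> nat \<Rightarrow> nat list \<Rightarrow> nat list \<Rightarrow> nat list" where
  "blend a b \<sigma> \<tau> =
     direct_sum (direct_sum_power (length \<tau> * a) \<sigma>) (direct_sum_power (length \<sigma> * b) \<tau>)"

lemma length_blend: "length (blend a b \<sigma> \<tau>) = (a + b) * length \<sigma> * length \<tau>"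
  by (simp add: blend_def algebra_simps)

lemma blend_in_all_perms:
  assumes "\<sigma> \<in> all_perms" "\<tau> \<in> all_perms"
  shows "blend a b \<sigma> \<tau> \<in> all_perms"
proof -
  have "\<sigma> \<in> perms (length \<sigma>)" "\<tau> \<in> perms (length \<tau>)"
    using assms by (auto simp: all_perms_def perms_def)
  then show ?thesis
    unfolding blend_def all_perms_def by (blast intro: direct_sum_in_perms direct_sum_power_in_perms)
qed

lemma c_occ_blend:
  assumes "\<pi> \<noteq> []"
  shows "length \<tau> * a * c_occ \<pi> \<sigma> + length \<sigma> * b * c_occ \<pi> \<tau> \<le> c_occ \<pi> (blend a b \<sigma> \<tau>)"
    and "c_occ \<pi> (blend a b \<sigma> \<tau>) \<le> length \<tau> * a * c_occ \<pi> \<sigma> + length \<sigma> * b * c_occ \<pi> \<tau>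
           + (length \<tau> * a + length \<sigma> * b + 1) * length \<pi>"
  using c_occ_direct_sum[OF assms, of "direct_sum_power (length \<tau> * a) \<sigma>"
      "direct_sum_power (length \<sigma> * b) \<tau>"]
    c_occ_direct_sum_power[OF assms, of "length \<tau> * a" \<sigma>]
    c_occ_direct_sum_power[OF assms, of "length \<sigma> * b" \<tau>]
  unfolding blend_def by (simp_all add: algebra_simps)

lemma c_occ_tilde_blend_estimate:
  assumes "\<pi> \<noteq> []" "\<sigma> \<noteq> []" "\<tau> \<noteq> []" "0 < a + b"
  shows "\<bar>c_occ_tilde \<pi> (blend a b \<sigma> \<tau>)
            - (real a / real (a + b) * c_occ_tilde \<pi> \<sigma> + real b / real (a + b) * c_occ_tilde \<pi> \<tau>)\<bar>
         \<le> real (length \<pi>) * (1 / real (length \<sigma>) + 1 / real (length \<tau>)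
                                 + 1 / (real (length \<sigma>) * real (length \<tau>)))"
proof -
  define n l N k where "n = length \<sigma>" "l = length \<tau>" "N = a + b" "k = length \<pi>"
  define X Y C where "X = c_occ \<pi> \<sigma>" "Y = c_occ \<pi> \<tau>" "C = c_occ \<pi> (blend a b \<sigma> \<tau>)"
  have lower: "l * a * X + n * b * Y \<le> C"
    and upper: "C \<le> l * a * X + n * b * Y + (l * a + n * b + 1) * k"
    using c_occ_blend[OF assms(1)] unfolding n_l_N_k_def X_Y_C_def by simp_all
  define E where "E = C - (l * a * X + n * b * Y)"
  have C: "C = l * a * X + n * b * Y + E" and E: "E \<le> (l * a + n * b + 1) * k"
    using lower upper by (simp_all add: E_def)
  have "1 \<le> N" "a \<le> N" "b \<le> N"
    using assms(4) by (auto simp: n_l_N_k_def)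
  then have ab: "real a \<le> real N" "real b \<le> real N" "1 \<le> real N"
    by simp_all
  have pos: "real n > 0" "real l > 0" "real N > 0"
    using assms ab by (simp_all add: n_l_N_k_def)
  have diff: "c_occ_tilde \<pi> (blend a b \<sigma> \<tau>)
          - (real a / real N * c_occ_tilde \<pi> \<sigma> + real b / real N * c_occ_tilde \<pi> \<tau>)
        = real E / (real n * real l * real N)"
    using pos unfolding c_occ_tilde_def length_blend C X_Y_C_def[symmetric] n_l_N_k_def[symmetric]
    by (simp add: field_simps)
  have "real E / (real n * real l * real N)
          \<le> real ((l * a + n * b + 1) * k) / (real n * real l * real N)"
    using E pos by (intro divide_right_mono) (simp_all only: of_nat_le_iff, simp)
  also have "\<dots> = real k * (real a / (real n * real N) + real b / (real l * real N)
                              + 1 / (real n * real l * real N))"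
    using pos by (simp add: field_simps)
  also have "\<dots> \<le> real k * (1 / real n + 1 / real l + 1 / (real n * real l))"
    using pos ab by (intro mult_left_mono add_mono) (simp_all add: field_simps mult_left_mono)
  finally show ?thesis
    using diff unfolding n_l_N_k_def by simp
qed

lemma c_occ_Nil_le_1: "c_occ [] s \<le> 1"
proof -
  have "{I. I \<subseteq> {1..length s} \<and> is_interval I \<and> pat I s = []} \<subseteq> {{}}"
    (is "?occ \<subseteq> _") by (auto simp: pat_def std_def dest: finite_subset)
  then have "card ?occ \<le> card {{} :: nat set}"
    by (intro card_mono) auto
  then show ?thesis
    by (simp add: c_occ_def)
qed

lemma tendsto_inverse_length:
  assumes "filterlim (\<lambda>m. length (\<sigma>s m)) at_top sequentially"
  shows "(\<lambda>m. 1 / real (length (\<sigma>s m))) \<longlonglongrightarrow> 0"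
  using tendsto_inverse_0_at_top[OF filterlim_compose[OF filterlim_real_sequentially assms]]
  by (simp add: divide_inverse)

lemma tendsto_c_occ_tilde_Nil:
  assumes "filterlim (\<lambda>m. length (\<sigma>s m)) at_top sequentially"
  shows "(\<lambda>m. c_occ_tilde [] (\<sigma>s m)) \<longlonglongrightarrow> 0"
proof (rule Lim_null_comparison[OF _ tendsto_inverse_length[OF assms]])
  show "\<forall>\<^sub>F m in sequentially. norm (c_occ_tilde [] (\<sigma>s m)) \<le> 1 / real (length (\<sigma>s m))"
    using c_occ_Nil_le_1 by (auto simp: c_occ_tilde_def divide_right_mono)
qed

lemma nat_ratio_approximation:
  fixes s :: real
  assumes "0 \<le> s" "s \<le> 1"
  obtains a b :: "nat \<Rightarrow> nat"
  where "\<And>m. 0 < a m + b m" and "(\<lambda>m. real (a m) / real (a m + b m)) \<longlonglongrightarrow> s"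
proof
  define a where "a m = nat \<lfloor>s * real (Suc m)\<rfloor>" for m
  have a: "real (a m) \<le> s * real (Suc m)" "s * real (Suc m) < real (a m) + 1" for m
  proof -
    have "real (a m) = of_int \<lfloor>s * real (Suc m)\<rfloor>"
      using assms by (simp add: a_def)
    then show "real (a m) \<le> s * real (Suc m)" "s * real (Suc m) < real (a m) + 1"
      by linarith+
  qed
  have a_le: "a m \<le> Suc m" for m
  proof -
    have "real (a m) \<le> real (Suc m)"
      using a(1)[of m] mult_left_le_one_le[of "real (Suc m)" s] assms by linarith
    then show ?thesis
      by (simp only: of_nat_le_iff)
  qed
  show "0 < a m + (Suc m - a m)" for m
    using a_le by simp
  show "(\<lambda>m. real (a m) / real (a m + (Suc m - a m))) \<longlonglongrightarrow> s"
  proof (rule Lim_null_comparison[OF _ LIMSEQ_inverse_real_of_nat, THEN LIM_zero_cancel])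
    show "\<forall>\<^sub>F m in sequentially.
        norm (real (a m) / real (a m + (Suc m - a m)) - s) \<le> inverse (real (Suc m))"
    proof (intro always_eventually allI)
      fix m
      have "real (a m) / real (a m + (Suc m - a m)) - s = (real (a m) - s * real (Suc m)) / real (Suc m)"
        using a_le[of m] by (simp add: field_simps)
      then show "norm (real (a m) / real (a m + (Suc m - a m)) - s) \<le> inverse (real (Suc m))"
        using a[of m] by (simp add: divide_inverse abs_mult abs_le_iff)
    qed
  qed
qed

lemma filterlim_length_blend:
  assumes "filterlim (\<lambda>m. length (\<sigma>s m)) at_top sequentially"
    and "filterlim (\<lambda>m. length (\<tau>s m)) at_top sequentially"
    and "\<And>m. 0 < a m + b m"
  shows "filterlim (\<lambda>m. length (blend (a m) (b m) (\<sigma>s m) (\<tau>s m))) at_top sequentially"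
proof (rule filterlim_at_top_mono[OF assms(1)])
  have "\<forall>\<^sub>F m in sequentially. 1 \<le> length (\<tau>s m)"
    using assms(2) by (simp add: filterlim_at_top)
  then show "\<forall>\<^sub>F m in sequentially. length (\<sigma>s m) \<le> length (blend (a m) (b m) (\<sigma>s m) (\<tau>s m))"
  proof eventually_elim
    case (elim m)
    have "1 * length (\<sigma>s m) * 1 \<le> (a m + b m) * length (\<sigma>s m) * length (\<tau>s m)"
      using elim assms(3)[of m] by (intro mult_mono) auto
    then show ?case
      by (simp add: length_blend)
  qed
qed

lemma eventually_nonempty:
  assumes "filterlim (\<lambda>m. length (\<sigma>s m)) at_top sequentially"
  shows "\<forall>\<^sub>F m in sequentially. \<sigma>s m \<noteq> []"
proof -
  have "\<forall>\<^sub>F m in sequentially. 1 \<le> length (\<sigma>s m)"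
    using assms by (simp add: filterlim_at_top)
  then show ?thesis
    by eventually_elim auto
qed

lemma tendsto_c_occ_tilde_blend:
  assumes \<sigma>s: "filterlim (\<lambda>m. length (\<sigma>s m)) at_top sequentially"
    and \<tau>s: "filterlim (\<lambda>m. length (\<tau>s m)) at_top sequentially"
    and ab: "\<And>m. 0 < a m + b m" "(\<lambda>m. real (a m) / real (a m + b m)) \<longlonglongrightarrow> s"
    and x: "(\<lambda>m. c_occ_tilde \<pi> (\<sigma>s m)) \<longlonglongrightarrow> x"
    and y: "(\<lambda>m. c_occ_tilde \<pi> (\<tau>s m)) \<longlonglongrightarrow> y"
  shows "(\<lambda>m. c_occ_tilde \<pi> (blend (a m) (b m) (\<sigma>s m) (\<tau>s m))) \<longlonglongrightarrow> s * x + (1 - s) * y"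
proof (cases "\<pi> = []")
  case True
  then have "x = 0" "y = 0"
    using LIMSEQ_unique x y tendsto_c_occ_tilde_Nil[OF \<sigma>s] tendsto_c_occ_tilde_Nil[OF \<tau>s] by blast+
  then show ?thesis
    using True tendsto_c_occ_tilde_Nil[OF filterlim_length_blend[OF \<sigma>s \<tau>s ab(1)]] by simp
next
  case False
  define g where "g m = real (a m) / real (a m + b m) * c_occ_tilde \<pi> (\<sigma>s m)
                       + real (b m) / real (a m + b m) * c_occ_tilde \<pi> (\<tau>s m)" for m
  define e where "e m = real (length \<pi>) * (1 / real (length (\<sigma>s m)) + 1 / real (length (\<tau>s m))
                   + 1 / (real (length (\<sigma>s m)) * real (length (\<tau>s m))))" for m
  have "real (b m) / real (a m + b m) = 1 - real (a m) / real (a m + b m)" for m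
  proof -
    have "0 < real (a m) + real (b m)"
      using ab(1)[of m] by (metis of_nat_0_less_iff of_nat_add)
    then show ?thesis
      by (simp add: field_simps)
  qed
  then have "(\<lambda>m. real (b m) / real (a m + b m)) \<longlonglongrightarrow> 1 - s"
    using tendsto_diff[OF tendsto_const ab(2)] by simp
  then have g: "g \<longlonglongrightarrow> s * x + (1 - s) * y"
    unfolding g_def by (rule tendsto_add[OF tendsto_mult[OF ab(2) x] tendsto_mult[OF _ y]])
  have inv: "(\<lambda>m. 1 / real (length (\<sigma>s m))) \<longlonglongrightarrow> 0" "(\<lambda>m. 1 / real (length (\<tau>s m))) \<longlonglongrightarrow> 0"
    using \<sigma>s \<tau>s by (simp_all add: tendsto_inverse_length)
  then have "(\<lambda>m. 1 / (real (length (\<sigma>s m)) * real (length (\<tau>s m)))) \<longlonglongrightarrow> 0"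
    using tendsto_mult[OF inv] by simp
  with inv have "e \<longlonglongrightarrow> real (length \<pi>) * (0 + 0 + 0)"
    unfolding e_def by (intro tendsto_mult[OF tendsto_const] tendsto_add)
  then have e: "e \<longlonglongrightarrow> 0"
    by simp
  have "(\<lambda>m. c_occ_tilde \<pi> (blend (a m) (b m) (\<sigma>s m) (\<tau>s m)) - g m) \<longlonglongrightarrow> 0"
  proof (rule Lim_null_comparison[OF _ e])
    show "\<forall>\<^sub>F m in sequentially. norm (c_occ_tilde \<pi> (blend (a m) (b m) (\<sigma>s m) (\<tau>s m)) - g m) \<le> e m"
      using eventually_nonempty[OF \<sigma>s] eventually_nonempty[OF \<tau>s]
    proof eventually_elim
      case (elim m)
      show ?case
        using c_occ_tilde_blend_estimate[OF False elim ab(1)[of m]]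
        by (simp only: real_norm_def g_def e_def)
    qed
  qed
  from tendsto_add[OF this g] show ?thesis
    by simp
qed

theorem mainTheorem8:
  fixes k :: nat
  shows "\<forall>v\<in>feasible_region k. \<forall>w\<in>feasible_region k. \<forall>t::real. 0 \<le> t \<and> t \<le> 1 \<longrightarrow>
           (\<lambda>\<pi>. (1 - t) * v \<pi> + t * w \<pi>) \<in> feasible_region k"
proof (intro ballI allI impI)
  fix v w and t :: real
  assume v: "v \<in> feasible_region k" and w: "w \<in> feasible_region k" and t: "0 \<le> t \<and> t \<le> 1"
  obtain \<sigma>s where \<sigma>s: "\<forall>m. \<sigma>s m \<in> all_perms" "filterlim (\<lambda>m. length (\<sigma>s m)) at_top sequentially"
    "\<forall>\<pi>\<in>perms k. (\<lambda>m. c_occ_tilde \<pi> (\<sigma>s m)) \<longlonglongrightarrow> v \<pi>"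
    using v unfolding feasible_region_def by blast
  obtain \<tau>s where \<tau>s: "\<forall>m. \<tau>s m \<in> all_perms" "filterlim (\<lambda>m. length (\<tau>s m)) at_top sequentially"
    "\<forall>\<pi>\<in>perms k. (\<lambda>m. c_occ_tilde \<pi> (\<tau>s m)) \<longlonglongrightarrow> w \<pi>"
    using w unfolding feasible_region_def by blast
  obtain a b where ab: "\<And>m. 0 < a m + b m" "(\<lambda>m. real (a m) / real (a m + b m)) \<longlonglongrightarrow> 1 - t"
    using nat_ratio_approximation[of "1 - t"] t by auto
  have "(\<lambda>m. c_occ_tilde \<pi> (blend (a m) (b m) (\<sigma>s m) (\<tau>s m))) \<longlonglongrightarrow> (1 - t) * v \<pi> + t * w \<pi>"
    if "\<pi> \<in> perms k" for \<pi>
    using tendsto_c_occ_tilde_blend[OF \<sigma>s(2) \<tau>s(2) ab] \<sigma>s(3) \<tau>s(3) that by simp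
  moreover have "blend (a m) (b m) (\<sigma>s m) (\<tau>s m) \<in> all_perms" for m
    using blend_in_all_perms \<sigma>s(1) \<tau>s(1) by blast
  moreover have "filterlim (\<lambda>m. length (blend (a m) (b m) (\<sigma>s m) (\<tau>s m))) at_top sequentially"
    using filterlim_length_blend[OF \<sigma>s(2) \<tau>s(2)] ab(1) by blast
  moreover have "(1 - t) * v \<pi> + t * w \<pi> \<in> {0..1}" if "\<pi> \<in> perms k" for \<pi>
    using v w t that by (auto simp: feasible_region_def intro!: convex_bound_le)
  moreover have "(1 - t) * v \<pi> + t * w \<pi> = 0" if "\<pi> \<notin> perms k" for \<pi>
    using v w that by (simp add: feasible_region_def)
  ultimately show "(\<lambda>\<pi>. (1 - t) * v \<pi> + t * w \<pi>) \<in> feasible_region k"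
    unfolding feasible_region_def
    by (intro CollectI conjI exI[of _ "\<lambda>m. blend (a m) (b m) (\<sigma>s m) (\<tau>s m)"]) auto
qed

end
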